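(* Let $s\ge0$, $p\in[1,+\infty)$, $\beta\in\left[-s,\frac dp-s\right]\setminus\{0\}$ and $f\in B^{s,\infty}_p(\mathbb R^d)$. Then $\dim_{\mathcal P}\big(E(\beta,f)\big)\le d-sp-\beta p$. (The wavelets are not assumed to be compactly supported.)
   Context: Standing setup. $(V_j)_{j\in\mathbb Z}$ is an orthogonal multiresolution analysis of $L^2(\mathbb R^d)$ with scaling function $\varphi$ (the integer translates of $\varphi$ form an orthonormal basis of $V_0$), and $\psi^{(1)},\dots,\psi^{(2^d-1)}$ are associated wavelets: the functions $2^{dj/2}\psi^{(i)}(2^j\cdot-k)$, $i\in\{1,\dots,2^d-1\}$, $j\in\mathbb Z$, $k\in\mathbb Z^d$, form an orthonormal basis of $L^2(\mathbb R^d)$. The functions $\varphi,\psi^{(i)}$ are smooth (at least $\lfloor s\rfloor+1$ continuous derivatives), and they and these derivatives have fast decay: for every $N\ge0$ there is $C_N$ with $|\psi^{(i)}(x)|\le C_N(1+\|x\|)^{-N}$ for all $x$. $\|\cdot\|$ is the supremum norm on $\mathbb R^d$. For $j\ge0$ and $k\in\mathbb Z^d$, the dyadic cube $\lambda=(j,k)$ is $\prod_{m=1}^d[k_m2^{-j},(k_m+1)2^{-j})$; $\Lambda_j$ is the set of dyadic cubes of generation $j$; $\psi^{(i)}_\lambda(x)=\psi^{(i)}(2^jx-k)$. For $f$ in $L^p(\mathbb R^d)$ set $C_k=\int\overline{\varphi(x-k)}f(x)\,dx$ and $c^{(i)}_\lambda=2^{dj}\int\overline{\psi^{(i)}_\lambda(x)}f(x)\,dx$.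 Define $Q_lf(x)=\sum_{i}\sum_{\lambda\in\Lambda_l}c^{(i)}_\lambda\psi^{(i)}_\lambda(x)$, $P_jf(x)=\sum_kC_k\varphi(x-k)+\sum_{0\le l<j}Q_lf(x)$, and, when $(P_jf(x))_j$ converges, $R_jf(x)=\sum_{l\ge j}Q_lf(x)$. The Besov space $B^{s,q}_p(\mathbb R^d)$ consists of those $f$ with $(C_k)\in\ell^p$ and $(\varepsilon_j)_{j\ge0}\in\ell^q$, where $\varepsilon_j=2^{(s-d/p)j}\big(\sum_i\sum_{\lambda\in\Lambda_j}|c^{(i)}_\lambda|^p\big)^{1/p}$; its norm is $\|(C_k)\|_{\ell^p}+\|(\varepsilon_j)\|_{\ell^q}$. Level set (with $\log0=-\infty$): for $\beta>0$, $E(\beta,f)=\{x:\lim_j\frac{\log|P_jf(x)|}{j\log2}=\beta\}$; for $\beta<0$, $E(\beta,f)=\{x:(P_jf(x))_j\text{ converges and }\lim_j\frac{\log|R_jf(x)|}{j\log2}=\beta\}$. $\dim_{\mathcal P}$ is packing dimension. *)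

theory Defs
  imports "HOL-Analysis.Analysis"
begin

section \<open>Functions on R^d, d = CARD('n)\<close>

definition ivec :: "int^'n::finite \<Rightarrow> real^'n" where
  "ivec k = (\<chi> m. real_of_int (k $ m))"

definition wav_idx :: "'n::finite itself \<Rightarrow> nat set" where
  "wav_idx _ = {1..<2 ^ CARD('n)}"

definition Lp :: "real \<Rightarrow> (real^'n::finite \<Rightarrow> complex) set" where
  "Lp p = {g. g \<in> borel_measurable lebesgue \<and> integrable lebesgue (\<lambda>x. norm (g x) powr p)}"

definition L2inner :: "(real^'n::finite \<Rightarrow> complex) \<Rightarrow> (real^'n \<Rightarrow> complex) \<Rightarrow> complex" where
  "L2inner g h = (LINT x|lebesgue. cnj (g x) * h x)"

definition L2norm :: "(real^'n::finite \<Rightarrow> complex) \<Rightarrow> real" where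
  "L2norm g = sqrt (LINT x|lebesgue. (norm (g x))^2)"

definition is_onb :: "(real^'n::finite \<Rightarrow> complex) set \<Rightarrow> 'i set \<Rightarrow> ('i \<Rightarrow> real^'n \<Rightarrow> complex) \<Rightarrow> bool" where
  "is_onb V I e \<longleftrightarrow>
     (\<forall>i\<in>I. e i \<in> V) \<and>
     (\<forall>i\<in>I. \<forall>i'\<in>I. L2inner (e i) (e i') = (if i = i' then 1 else 0)) \<and>
     (\<forall>g\<in>V. (\<forall>i\<in>I. L2inner (e i) g = 0) \<longrightarrow> (AE x in lebesgue. g x = 0))"

definition ortho_mra :: "(int \<Rightarrow> (real^'n::finite \<Rightarrow> complex) set) \<Rightarrow> (real^'n \<Rightarrow> complex) \<Rightarrow> bool" where
  "ortho_mra V \<phi> \<longleftrightarrow>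
     (\<forall>j. V j \<subseteq> Lp 2) \<and>
     (\<forall>j. (\<lambda>x. 0) \<in> V j \<and> (\<forall>g\<in>V j. \<forall>h\<in>V j. (\<lambda>x. g x + h x) \<in> V j)
          \<and> (\<forall>g\<in>V j. \<forall>c. (\<lambda>x. c * g x) \<in> V j)) \<and>
     (\<forall>j. \<forall>g\<in>Lp 2. (\<forall>e>0. \<exists>h\<in>V j. L2norm (\<lambda>x. g x - h x) < e) \<longrightarrow> g \<in> V j) \<and>
     (\<forall>j. V j \<subseteq> V (j + 1)) \<and>
     (\<forall>g\<in>Lp 2. \<forall>e>0. \<exists>j. \<exists>h\<in>V j. L2norm (\<lambda>x. g x - h x) < e) \<and>
     (\<forall>g. (\<forall>j. g \<in> V j) \<longrightarrow> (AE x in lebesgue. g x = 0)) \<and>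
     (\<forall>j g. g \<in> V j \<longleftrightarrow> (\<lambda>x. g (2 *\<^sub>R x)) \<in> V (j + 1)) \<and>
     is_onb (V 0) UNIV (\<lambda>k x. \<phi> (x - ivec k))"

definition assoc_wavelets :: "(int \<Rightarrow> (real^'n::finite \<Rightarrow> complex) set) \<Rightarrow> (nat \<Rightarrow> real^'n \<Rightarrow> complex) \<Rightarrow> bool" where
  "assoc_wavelets V \<psi> \<longleftrightarrow>
     (\<forall>i\<in>wav_idx TYPE('n). \<forall>k. (\<lambda>x. \<psi> i (x - ivec k)) \<in> V 1
        \<and> (\<forall>g\<in>V 0. L2inner g (\<lambda>x. \<psi> i (x - ivec k)) = 0)) \<and>
     is_onb (Lp 2) (wav_idx TYPE('n) \<times> (UNIV :: int set) \<times> (UNIV :: (int^'n) set))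
       (\<lambda>(i, j, k) x. complex_of_real (2 powr (real CARD('n) * real_of_int j / 2))
                        * \<psi> i (2 powr real_of_int j *\<^sub>R x - ivec k))"

definition fast_decay :: "(real^'n::finite \<Rightarrow> complex) \<Rightarrow> bool" where
  "fast_decay g \<longleftrightarrow> (\<forall>N::nat. \<exists>C. \<forall>x. norm (g x) \<le> C * (1 + infnorm x) powr (- real N))"

definition partial_deriv :: "'n::finite \<Rightarrow> (real^'n \<Rightarrow> complex) \<Rightarrow> real^'n \<Rightarrow> complex" where
  "partial_deriv m g x = vector_derivative (\<lambda>t. g (x + t *\<^sub>R axis m 1)) (at 0)"

fun Cdecay :: "nat \<Rightarrow> (real^'n::finite \<Rightarrow> complex) \<Rightarrow> bool" where
  "Cdecay 0 g \<longleftrightarrow> continuous_on UNIV g \<and> fast_decay g"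
| "Cdecay (Suc n) g \<longleftrightarrow> Cdecay 0 g \<and>
     (\<forall>m. (\<forall>x. (\<lambda>t. g (x + t *\<^sub>R axis m 1)) differentiable (at 0)) \<and> Cdecay n (partial_deriv m g))"

definition scal_coef :: "(real^'n::finite \<Rightarrow> complex) \<Rightarrow> (real^'n \<Rightarrow> complex) \<Rightarrow> int^'n \<Rightarrow> complex" where
  "scal_coef \<phi> f k = (LINT x|lebesgue. cnj (\<phi> (x - ivec k)) * f x)"

definition wav_fun :: "(nat \<Rightarrow> real^'n::finite \<Rightarrow> complex) \<Rightarrow> nat \<Rightarrow> nat \<Rightarrow> int^'n \<Rightarrow> real^'n \<Rightarrow> complex" where
  "wav_fun \<psi> i j k x = \<psi> i ((2::real) ^ j *\<^sub>R x - ivec k)"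

definition wav_coef :: "(nat \<Rightarrow> real^'n::finite \<Rightarrow> complex) \<Rightarrow> (real^'n \<Rightarrow> complex) \<Rightarrow> nat \<Rightarrow> nat \<Rightarrow> int^'n \<Rightarrow> complex" where
  "wav_coef \<psi> f i j k = complex_of_real (2 ^ (CARD('n) * j))
                         * (LINT x|lebesgue. cnj (wav_fun \<psi> i j k x) * f x)"

definition Qop :: "(nat \<Rightarrow> real^'n::finite \<Rightarrow> complex) \<Rightarrow> (real^'n \<Rightarrow> complex) \<Rightarrow> nat \<Rightarrow> real^'n \<Rightarrow> complex" where
  "Qop \<psi> f l x = (\<Sum>i\<in>wav_idx TYPE('n). \<Sum>\<^sub>\<infinity>k. wav_coef \<psi> f i l k * wav_fun \<psi> i l k x)"

definition Pop :: "(real^'n::finite \<Rightarrow> complex) \<Rightarrow> (nat \<Rightarrow> real^'n \<Rightarrow> complex) \<Rightarrow> (real^'n \<Rightarrow> complex) \<Rightarrow> nat \<Rightarrow> real^'n \<Rightarrow> complex" where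
  "Pop \<phi> \<psi> f j x = (\<Sum>\<^sub>\<infinity>k. scal_coef \<phi> f k * \<phi> (x - ivec k)) + (\<Sum>l<j. Qop \<psi> f l x)"

definition Rop :: "(nat \<Rightarrow> real^'n::finite \<Rightarrow> complex) \<Rightarrow> (real^'n \<Rightarrow> complex) \<Rightarrow> nat \<Rightarrow> real^'n \<Rightarrow> complex" where
  "Rop \<psi> f j x = (\<Sum>n. Qop \<psi> f (j + n) x)"

definition besov_inf :: "(real^'n::finite \<Rightarrow> complex) \<Rightarrow> (nat \<Rightarrow> real^'n \<Rightarrow> complex) \<Rightarrow> real \<Rightarrow> real \<Rightarrow> (real^'n \<Rightarrow> complex) set" where
  "besov_inf \<phi> \<psi> s p = {f. f \<in> Lp p \<and>
     (\<lambda>k. norm (scal_coef \<phi> f k) powr p) summable_on UNIV \<and>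
     (\<forall>i\<in>wav_idx TYPE('n). \<forall>j. (\<lambda>k. norm (wav_coef \<psi> f i j k) powr p) summable_on UNIV) \<and>
     bdd_above (range (\<lambda>j. 2 powr ((s - real CARD('n) / p) * real j) *
        (\<Sum>i\<in>wav_idx TYPE('n). \<Sum>\<^sub>\<infinity>k. norm (wav_coef \<psi> f i j k) powr p) powr (1 / p)))}"

text \<open>Level sets E(beta,f). The limit of log|.|/(j log 2) (with log 0 = -infinity) equals the
  finite value beta iff the terms are eventually nonzero and log_2|.|/j tends to beta.\<close>
definition level_set :: "(real^'n::finite \<Rightarrow> complex) \<Rightarrow> (nat \<Rightarrow> real^'n \<Rightarrow> complex) \<Rightarrow> real \<Rightarrow> (real^'n \<Rightarrow> complex) \<Rightarrow> (real^'n) set" where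
  "level_set \<phi> \<psi> \<beta> f =
    (if \<beta> > 0 then
       {x. (\<forall>\<^sub>F j in sequentially. Pop \<phi> \<psi> f j x \<noteq> 0) \<and>
           ((\<lambda>j. log 2 (norm (Pop \<phi> \<psi> f j x)) / real j) \<longlongrightarrow> \<beta>) sequentially}
     else if \<beta> < 0 then
       {x. convergent (\<lambda>j. Pop \<phi> \<psi> f j x) \<and>
           (\<forall>\<^sub>F j in sequentially. Rop \<psi> f j x \<noteq> 0) \<and>
           ((\<lambda>j. log 2 (norm (Rop \<psi> f j x)) / real j) \<longlongrightarrow> \<beta>) sequentially}
     else {})"

definition packing_pre :: "real \<Rightarrow> real \<Rightarrow> ('a::metric_space) set \<Rightarrow> ennreal" where
  "packing_pre t \<delta> E =
     (SUP P \<in> {(I :: nat set, c :: nat \<Rightarrow> 'a, r :: nat \<Rightarrow> real).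
                 (\<forall>i\<in>I. c i \<in> E \<and> 0 < r i \<and> 2 * r i \<le> \<delta>) \<and>
                 (\<forall>i\<in>I. \<forall>i'\<in>I. i \<noteq> i' \<longrightarrow> cball (c i) (r i) \<inter> cball (c i') (r i') = {})}.
        (case P of (I, c, r) \<Rightarrow> (\<Sum>\<^sub>\<infinity>i\<in>I. ennreal ((2 * r i) powr t))))"

definition packing_premeasure :: "real \<Rightarrow> ('a::metric_space) set \<Rightarrow> ennreal" where
  "packing_premeasure t E = (INF \<delta> \<in> {0<..}. packing_pre t \<delta> E)"

definition packing_measure :: "real \<Rightarrow> ('a::metric_space) set \<Rightarrow> ennreal" where
  "packing_measure t E =
     (INF A \<in> {A :: nat \<Rightarrow> 'a set. E \<subseteq> (\<Union>i. A i)}. \<Sum>i. packing_premeasure t (A i))"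

definition packing_dim :: "('a::metric_space) set \<Rightarrow> real" where
  "packing_dim E = Inf {t. 0 \<le> t \<and> packing_measure t E = 0}"

end

theory Submission
  imports Defs "HOL-Real_Asymp.Real_Asymp"
begin

(*
  Let x \<in> E(\<beta>, f). The partial sums P_j f(x) (if \<beta> > 0) or the tails R_j f(x) (if \<beta> < 0)
  have size between 2^((\<beta> - \<epsilon>) j) and 2^((\<beta> + \<epsilon>) j), so the block sum of Q_l f(x) over
  m n \<le> l < (m + 1) n is at least about 2^((\<beta> - \<epsilon>)(m + 1) n). The Besov condition bounds every
  coefficient of level l by B 2^((d/p - s) l), and the wavelets decay fast, so the coefficients
  whose cubes are farther than 2^((\<eta> - 1) l) from x contribute little to Q_l f(x). Hence, for all
  large n, some level l of the block carries a coefficient of size 2^((\<beta> - 2\<epsilon>)(m + 1) n) whose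
  cube lies near x. The Besov condition also allows only about 2^((d - s p - \<beta> p)(m + 1) n) such
  coefficients, so E(\<beta>, f) is covered, for every large n, by that many balls of radius about
  2^(-(1 - \<eta>) m n). Taking m large and \<epsilon>, \<eta> small makes the packing premeasure of every
  dimension t > d - s p - \<beta> p vanish on each piece of a countable cover of E(\<beta>, f).
*)

section \<open>Packing dimension\<close>

lemma packing_dim_le:
  fixes E :: "'a::metric_space set"
  assumes "0 \<le> l" and "\<And>t. l < t \<Longrightarrow> packing_measure t E = 0"
  shows "packing_dim E \<le> l"
  unfolding packing_dim_def
proof (rule field_le_epsilon)
  fix e :: real assume "0 < e"
  with assms show "Inf {t. 0 \<le> t \<and> packing_measure t E = 0} \<le> l + e"
    by (intro cInf_lower bdd_belowI[of _ 0]) auto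
qed

lemma packing_measure_eq_0_if_covered:
  fixes E :: "'a::metric_space set" and F :: "nat \<Rightarrow> 'a set"
  assumes "E \<subseteq> (\<Union>J. F J)" and "\<And>J. packing_premeasure t (F J) = 0"
  shows "packing_measure t E = 0"
proof -
  have "packing_measure t E \<le> (\<Sum>J. packing_premeasure t (F J))"
    unfolding packing_measure_def using assms(1) by (intro INF_lower) auto
  with assms(2) show ?thesis by simp
qed

lemma exists_geometric_scale:
  fixes \<rho> \<gamma> r :: real and N :: nat
  assumes "0 < \<gamma>" "0 < \<rho>" "0 < r" "r \<le> \<rho> * 2 powr (-\<gamma> * N)"
  shows "\<exists>n\<ge>N. \<rho> * 2 powr (-\<gamma> * n) \<le> r \<and> r \<le> \<rho> * 2 powr (-\<gamma> * (real n - 1))"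
proof -
  have "\<forall>\<^sub>F n in sequentially. \<rho> * 2 powr (-\<gamma> * real n) < r"
    using assms(1,3) by real_asymp
  then obtain n0 where "\<And>n. n0 \<le> n \<Longrightarrow> \<rho> * 2 powr (-\<gamma> * real n) < r"
    by (auto simp: eventually_sequentially)
  then have "\<rho> * 2 powr (-\<gamma> * real (max n0 N)) < r" by simp
  then have ex: "\<exists>n. N \<le> n \<and> \<rho> * 2 powr (-\<gamma> * n) \<le> r"
    by (intro exI[of _ "max n0 N"]) simp
  define n where "n = (LEAST n. N \<le> n \<and> \<rho> * 2 powr (-\<gamma> * n) \<le> r)"
  have n: "N \<le> n" "\<rho> * 2 powr (-\<gamma> * n) \<le> r"
    using LeastI_ex[OF ex] by (simp_all add: n_def)
  have "r \<le> \<rho> * 2 powr (-\<gamma> * (real n - 1))"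
  proof (cases "n = N")
    case True
    have "\<rho> * 2 powr (-\<gamma> * N) \<le> \<rho> * 2 powr (-\<gamma> * (real N - 1))"
      using assms(1,2) by (intro mult_left_mono) (auto simp: algebra_simps)
    with assms(4) True show ?thesis by simp
  next
    case False
    with n have "\<not> (N \<le> n - 1 \<and> \<rho> * 2 powr (-\<gamma> * real (n - 1)) \<le> r)"
      unfolding n_def by (intro not_less_Least) auto
    with False n(1) show ?thesis by (auto simp: of_nat_diff)
  qed
  with n show ?thesis by blast
qed

lemma sum_geometric_tail_le:
  fixes q :: real
  assumes "0 \<le> q" "q < 1"
  shows "(\<Sum>n=N..M. q ^ n) \<le> q ^ N / (1 - q)"
  using assms by (auto simp: sum_gp divide_right_mono)

lemma sum_packing_le_sum_centres:
  fixes F :: "'a::metric_space set" and Y :: "nat \<Rightarrow> 'a set" and c :: "nat \<Rightarrow> 'a" and r :: "nat \<Rightarrow> real"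
  assumes cover: "\<And>n. N \<le> n \<Longrightarrow> F \<subseteq> (\<Union>y\<in>Y n. cball y (\<rho> * 2 powr (-\<gamma> * n)))"
    and fin: "\<And>n. finite (Y n)" and "0 < \<gamma>" "0 < \<rho>" "0 \<le> t" "finite G"
    and packing: "\<And>i. i \<in> G \<Longrightarrow> c i \<in> F \<and> 0 < r i \<and> r i \<le> \<rho> * 2 powr (-\<gamma> * N)"
    and disjoint: "\<And>i i'. i \<in> G \<Longrightarrow> i' \<in> G \<Longrightarrow> i \<noteq> i' \<Longrightarrow> cball (c i) (r i) \<inter> cball (c i') (r i') = {}"
  obtains M where "(\<Sum>i\<in>G. (2 * r i) powr t)
    \<le> (\<Sum>n=N..M. real (card (Y n)) * (2 * (\<rho> * 2 powr (-\<gamma> * (real n - 1)))) powr t)"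
proof -
  define w where "w n = (2 * (\<rho> * 2 powr (-\<gamma> * (real n - 1)))) powr t" for n :: nat
  have "\<forall>i\<in>G. \<exists>n\<ge>N. \<rho> * 2 powr (-\<gamma> * n) \<le> r i \<and> r i \<le> \<rho> * 2 powr (-\<gamma> * (real n - 1))"
    using packing \<open>0 < \<gamma>\<close> \<open>0 < \<rho>\<close> by (intro ballI exists_geometric_scale) auto
  then obtain n where n: "\<And>i. i \<in> G \<Longrightarrow> N \<le> n i \<and> \<rho> * 2 powr (-\<gamma> * n i) \<le> r i
      \<and> r i \<le> \<rho> * 2 powr (-\<gamma> * (real (n i) - 1))"
    by metis
  have "\<forall>i\<in>G. \<exists>z\<in>Y (n i). z \<in> cball (c i) (r i)"
  proof
    fix i assume "i \<in> G"
    then have "c i \<in> (\<Union>z\<in>Y (n i). cball z (\<rho> * 2 powr (-\<gamma> * n i)))"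
      using cover n packing by blast
    then obtain z where "z \<in> Y (n i)" "dist z (c i) \<le> \<rho> * 2 powr (-\<gamma> * n i)"
      by auto
    with n[OF \<open>i \<in> G\<close>] show "\<exists>z\<in>Y (n i). z \<in> cball (c i) (r i)"
      by (intro bexI[of _ z]) (auto simp: dist_commute)
  qed
  then obtain y where y: "\<And>i. i \<in> G \<Longrightarrow> y i \<in> Y (n i) \<and> y i \<in> cball (c i) (r i)"
    by metis
  \<comment> \<open>Disjointness of the balls makes the choice of centres injective.\<close>
  have inj: "inj_on (\<lambda>i. (n i, y i)) G"
    using disjoint y by (intro inj_onI) (metis disjoint_iff prod.inject)
  define M where "M = Max (n ` G)"
  have "(\<Sum>i\<in>G. (2 * r i) powr t) \<le> (\<Sum>i\<in>G. w (n i))"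
    unfolding w_def using n packing \<open>0 \<le> t\<close>
    by (intro sum_mono powr_mono2) (auto simp: less_imp_le)
  also have "\<dots> = (\<Sum>(m, z)\<in>(\<lambda>i. (n i, y i)) ` G. w m)"
    using inj by (simp add: sum.reindex)
  also have "\<dots> \<le> (\<Sum>(m, z)\<in>(SIGMA m:{N..M}. Y m). w m)"
  proof (rule sum_mono2)
    show "(\<lambda>i. (n i, y i)) ` G \<subseteq> (SIGMA m:{N..M}. Y m)"
      using \<open>finite G\<close> n y by (auto simp: M_def)
  qed (use fin in \<open>auto simp: w_def\<close>)
  also have "\<dots> = (\<Sum>m=N..M. real (card (Y m)) * w m)"
    using fin by (simp add: sum.Sigma[symmetric])
  finally show thesis
    unfolding w_def by (rule that)
qed

lemma packing_pre_le_if_covered: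
  fixes F :: "'a::metric_space set" and Y :: "nat \<Rightarrow> 'a set"
  assumes cover: "\<And>n. N \<le> n \<Longrightarrow> F \<subseteq> (\<Union>y\<in>Y n. cball y (\<rho> * 2 powr (-\<gamma> * n)))"
    and fin: "\<And>n. finite (Y n)" and card: "\<And>n. real (card (Y n)) \<le> C * 2 powr (\<alpha> * n)"
    and "0 < \<gamma>" "0 < \<rho>" "0 \<le> t" "\<alpha> < t * \<gamma>"
  defines "q \<equiv> 2 powr (\<alpha> - t * \<gamma>)"
  shows "packing_pre t (2 * \<rho> * 2 powr (-\<gamma> * N)) F
           \<le> ennreal (C * (2 * \<rho>) powr t * 2 powr (t * \<gamma>) * (q ^ N / (1 - q)))"
proof -
  define K where "K = C * (2 * \<rho>) powr t * 2 powr (t * \<gamma>)"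
  define w where "w n = (2 * (\<rho> * 2 powr (-\<gamma> * (real n - 1)))) powr t" for n :: nat
  have "q < 1"
    unfolding q_def by (rule powr_less_one) (use \<open>\<alpha> < t * \<gamma>\<close> in auto)
  moreover have "0 \<le> q" by (simp add: q_def)
  ultimately have q: "0 \<le> q" "q < 1" by auto
  have "0 \<le> C" using card[of 0] by simp
  then have "0 \<le> K" by (simp add: K_def)
  have card_w: "real (card (Y n)) * w n \<le> K * q ^ n" for n
  proof -
    have "w n = (2 * \<rho>) powr t * 2 powr (t * \<gamma>) * 2 powr (- t * \<gamma> * n)"
      using \<open>0 < \<rho>\<close> unfolding w_def
      by (simp add: powr_mult powr_powr flip: powr_add) (simp add: algebra_simps)
    moreover have "2 powr (\<alpha> * n) * 2 powr (- t * \<gamma> * n) = q ^ n"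
      by (simp add: q_def powr_power flip: powr_add) (simp add: algebra_simps)
    ultimately have "C * 2 powr (\<alpha> * n) * w n = K * q ^ n"
      by (simp add: K_def mult_ac)
    moreover have "0 \<le> w n" by (simp add: w_def)
    ultimately show ?thesis
      using card[of n] by (metis mult_right_mono)
  qed
  show ?thesis
    unfolding packing_pre_def
  proof (rule SUP_least, clarify)
    fix I :: "nat set" and c :: "nat \<Rightarrow> 'a" and r :: "nat \<Rightarrow> real"
    assume packing: "\<forall>i\<in>I. c i \<in> F \<and> 0 < r i \<and> 2 * r i \<le> 2 * \<rho> * 2 powr (-\<gamma> * N)"
      and disjoint: "\<forall>i\<in>I. \<forall>i'\<in>I. i \<noteq> i' \<longrightarrow> cball (c i) (r i) \<inter> cball (c i') (r i') = {}"
    have partial_sums: "(\<Sum>i\<in>G. (2 * r i) powr t) \<le> K * (q ^ N / (1 - q))" if G: "finite G" "G \<subseteq> I" for G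
    proof -
      have pk: "\<And>i. i \<in> G \<Longrightarrow> c i \<in> F \<and> 0 < r i \<and> r i \<le> \<rho> * 2 powr (-\<gamma> * N)"
        using G packing by auto
      have dj: "\<And>i i'. i \<in> G \<Longrightarrow> i' \<in> G \<Longrightarrow> i \<noteq> i' \<Longrightarrow> cball (c i) (r i) \<inter> cball (c i') (r i') = {}"
        using G disjoint by blast
      obtain M where "(\<Sum>i\<in>G. (2 * r i) powr t) \<le> (\<Sum>m=N..M. real (card (Y m)) * w m)"
        unfolding w_def
        by (rule sum_packing_le_sum_centres[OF cover fin \<open>0 < \<gamma>\<close> \<open>0 < \<rho>\<close> \<open>0 \<le> t\<close> \<open>finite G\<close> pk dj])
      also have "\<dots> \<le> (\<Sum>m=N..M. K * q ^ m)"
        by (intro sum_mono card_w)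
      also have "\<dots> \<le> K * (q ^ N / (1 - q))"
        unfolding sum_distrib_left[symmetric]
        by (intro mult_left_mono sum_geometric_tail_le q \<open>0 \<le> K\<close>)
      finally show ?thesis .
    qed
    show "(\<Sum>\<^sub>\<infinity>i\<in>I. ennreal ((2 * r i) powr t))
        \<le> ennreal (C * (2 * \<rho>) powr t * 2 powr (t * \<gamma>) * (q ^ N / (1 - q)))"
    proof (rule infsum_le_finite_sums)
      fix G assume "finite G" "G \<subseteq> I"
      then have "ennreal (\<Sum>i\<in>G. (2 * r i) powr t) \<le> ennreal (K * (q ^ N / (1 - q)))"
        by (intro ennreal_leI partial_sums)
      then show "(\<Sum>i\<in>G. ennreal ((2 * r i) powr t))
          \<le> ennreal (C * (2 * \<rho>) powr t * 2 powr (t * \<gamma>) * (q ^ N / (1 - q)))"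
        by (simp add: K_def)
    qed (rule nonneg_summable_on_complete, simp)
  qed
qed

lemma packing_premeasure_eq_0_if_covered:
  fixes F :: "'a::metric_space set" and Y :: "nat \<Rightarrow> 'a set"
  assumes "\<And>n. J \<le> n \<Longrightarrow> F \<subseteq> (\<Union>y\<in>Y n. cball y (\<rho> * 2 powr (-\<gamma> * n)))"
    and "\<And>n. finite (Y n)" and "\<And>n. real (card (Y n)) \<le> C * 2 powr (\<alpha> * n)"
    and "0 < \<gamma>" "0 < \<rho>" "0 \<le> t" "\<alpha> < t * \<gamma>"
  shows "packing_premeasure t F = 0"
proof -
  define q where "q = 2 powr (\<alpha> - t * \<gamma>)"
  define b where "b N = C * (2 * \<rho>) powr t * 2 powr (t * \<gamma>) * (q ^ N / (1 - q))" for N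
  have "packing_premeasure t F \<le> ennreal (b N)" if "J \<le> N" for N
  proof -
    have "packing_premeasure t F \<le> packing_pre t (2 * \<rho> * 2 powr (-\<gamma> * N)) F"
      unfolding packing_premeasure_def using \<open>0 < \<rho>\<close> by (intro INF_lower) auto
    also have "\<dots> \<le> ennreal (b N)"
      unfolding b_def q_def using assms that
      by (intro packing_pre_le_if_covered[where Y = Y]) auto
    finally show ?thesis .
  qed
  then have "\<forall>\<^sub>F N in sequentially. packing_premeasure t F \<le> ennreal (b N)"
    by (auto simp: eventually_sequentially)
  moreover have "q < 1"
    unfolding q_def by (rule powr_less_one) (use \<open>\<alpha> < t * \<gamma>\<close> in auto)
  then have "(\<lambda>N. q ^ N) \<longlonglongrightarrow> 0"
    by (intro LIMSEQ_power_zero) (simp add: q_def)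
  then have "(\<lambda>N. ennreal (b N)) \<longlonglongrightarrow> ennreal 0"
    unfolding b_def by (intro tendsto_ennrealI tendsto_mult_right_zero tendsto_divide_zero)
  ultimately have "packing_premeasure t F \<le> 0"
    by (intro tendsto_lowerbound) auto
  then show ?thesis by simp
qed

section \<open>Lattice sums\<close>

lemma sum_inverse_square_nat_le:
  assumes "finite N"
  shows "(\<Sum>n\<in>N. 1 / (1 + real n)\<^sup>2) \<le> 3"
proof -
  have sums: "(\<lambda>n. 1 / (1 + real n)\<^sup>2) sums (pi\<^sup>2 / 6)"
    using inverse_squares_sums by (simp add: add.commute)
  have "(\<Sum>n\<in>N. 1 / (1 + real n)\<^sup>2) \<le> pi\<^sup>2 / 6"
    using sum_le_suminf[OF sums_summable[OF sums] assms] sums_unique[OF sums] by simp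
  also have "\<dots> \<le> 4\<^sup>2 / 6"
    using pi_less_4 pi_gt_zero by (intro divide_right_mono power_mono) auto
  finally show ?thesis by simp
qed

lemma sum_inverse_square_int_le:
  assumes "finite A"
  shows "(\<Sum>a\<in>A. 1 / (1 + \<bar>real_of_int a\<bar>)\<^sup>2) \<le> 6"
proof -
  let ?f = "\<lambda>a::int. 1 / (1 + \<bar>real_of_int a\<bar>)\<^sup>2"
  let ?g = "\<lambda>n::nat. 1 / (1 + real n)\<^sup>2"
  have "(\<Sum>a\<in>A \<inter> {0..}. ?f a) = (\<Sum>n\<in>nat ` (A \<inter> {0..}). ?g n)"
    by (subst sum.reindex) (auto simp: inj_on_def intro!: sum.cong)
  moreover have "(\<Sum>a\<in>A - {0..}. ?f a) = (\<Sum>n\<in>(\<lambda>a. nat (- a)) ` (A - {0..}). ?g n)"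
    by (subst sum.reindex) (auto simp: inj_on_def intro!: sum.cong)
  ultimately have "(\<Sum>a\<in>A. ?f a) = (\<Sum>n\<in>nat ` (A \<inter> {0..}). ?g n)
      + (\<Sum>n\<in>(\<lambda>a. nat (- a)) ` (A - {0..}). ?g n)"
    using sum.Int_Diff[OF assms] by metis
  also have "\<dots> \<le> 3 + 3"
    using assms by (intro add_mono sum_inverse_square_nat_le) auto
  finally show ?thesis by simp
qed

lemma sum_inverse_square_shifted_int_le:
  assumes "finite A"
  shows "(\<Sum>a\<in>A. 1 / (1 + \<bar>u - real_of_int a\<bar>)\<^sup>2) \<le> 24"
proof -
  have shift: "1 / (1 + \<bar>u - real_of_int a\<bar>)\<^sup>2 \<le> 4 * (1 / (1 + \<bar>real_of_int (\<lfloor>u\<rfloor> - a)\<bar>)\<^sup>2)"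
    for a :: int
  proof -
    have "1 + \<bar>real_of_int (\<lfloor>u\<rfloor> - a)\<bar> \<le> 2 * (1 + \<bar>u - real_of_int a\<bar>)"
      using floor_correct[of u] by (simp add: abs_if) linarith
    then have "(1 + \<bar>real_of_int (\<lfloor>u\<rfloor> - a)\<bar>)\<^sup>2 \<le> (2 * (1 + \<bar>u - real_of_int a\<bar>))\<^sup>2"
      by (rule power_mono) simp
    also have "\<dots> = 4 * (1 + \<bar>u - real_of_int a\<bar>)\<^sup>2"
      by (simp only: power_mult_distrib) simp
    finally have "(1 + \<bar>real_of_int (\<lfloor>u\<rfloor> - a)\<bar>)\<^sup>2 \<le> 4 * (1 + \<bar>u - real_of_int a\<bar>)\<^sup>2" .
    moreover have "0 < (1 + \<bar>u - real_of_int a\<bar>)\<^sup>2" "0 < (1 + \<bar>real_of_int (\<lfloor>u\<rfloor> - a)\<bar>)\<^sup>2"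
      by (simp_all add: add_pos_nonneg)
    ultimately show ?thesis
      by (simp add: field_simps)
  qed
  have "(\<Sum>a\<in>A. 1 / (1 + \<bar>u - real_of_int a\<bar>)\<^sup>2)
      \<le> (\<Sum>a\<in>A. 4 * (1 / (1 + \<bar>real_of_int (\<lfloor>u\<rfloor> - a)\<bar>)\<^sup>2))"
    by (intro sum_mono shift)
  also have "\<dots> = 4 * (\<Sum>b\<in>(\<lambda>a. \<lfloor>u\<rfloor> - a) ` A. 1 / (1 + \<bar>real_of_int b\<bar>)\<^sup>2)"
    by (subst sum.reindex) (auto simp: inj_on_def sum_distrib_left)
  also have "\<dots> \<le> 4 * 6"
    using assms by (intro mult_left_mono sum_inverse_square_int_le) auto
  finally show ?thesis by simp
qed

lemma sum_lattice_inverse_power_le: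
  fixes y :: "real^'n::finite" and G :: "(int^'n) set"
  assumes "finite G"
  shows "(\<Sum>k\<in>G. 1 / (1 + infnorm (y - ivec k)) ^ (2 * CARD('n))) \<le> 24 ^ CARD('n)"
proof -
  let ?h = "\<lambda>m a. 1 / (1 + \<bar>y $ m - real_of_int a\<bar>)\<^sup>2"
  define S where "S m = (\<lambda>k. k $ m) ` G" for m
  have termwise: "1 / (1 + infnorm (y - ivec k)) ^ (2 * CARD('n)) \<le> (\<Prod>m\<in>UNIV. ?h m (k $ m))" for k
  proof -
    have "\<bar>y $ m - real_of_int (k $ m)\<bar> \<le> infnorm (y - ivec k)" for m
      using component_le_infnorm_cart[of "y - ivec k" m] by (simp add: ivec_def)
    then have "(\<Prod>m\<in>UNIV. (1 + \<bar>y $ m - real_of_int (k $ m)\<bar>)\<^sup>2)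
        \<le> (\<Prod>m\<in>(UNIV::'n set). (1 + infnorm (y - ivec k))\<^sup>2)"
      by (intro prod_mono conjI power_mono) auto
    also have "\<dots> = (1 + infnorm (y - ivec k)) ^ (2 * CARD('n))"
      by (simp add: power_mult[symmetric] mult.commute)
    finally have le: "(\<Prod>m\<in>UNIV. (1 + \<bar>y $ m - real_of_int (k $ m)\<bar>)\<^sup>2)
        \<le> (1 + infnorm (y - ivec k)) ^ (2 * CARD('n))" .
    moreover have "0 < (\<Prod>m\<in>(UNIV::'n set). (1 + \<bar>y $ m - real_of_int (k $ m)\<bar>)\<^sup>2)"
      by (intro prod_pos) (auto simp: add_pos_nonneg)
    ultimately show ?thesis
      unfolding prod_dividef prod.neutral_const by (intro frac_le) auto
  qed
  have "(\<Sum>k\<in>G. 1 / (1 + infnorm (y - ivec k)) ^ (2 * CARD('n)))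
      \<le> (\<Sum>k\<in>G. \<Prod>m\<in>UNIV. ?h m (k $ m))"
    by (intro sum_mono termwise)
  also have "\<dots> = (\<Sum>g\<in>(\<lambda>k m. k $ m) ` G. \<Prod>m\<in>UNIV. ?h m (g m))"
    by (subst sum.reindex) (auto simp: inj_on_def vec_eq_iff)
  also have "\<dots> \<le> (\<Sum>g\<in>PiE UNIV S. \<Prod>m\<in>UNIV. ?h m (g m))"
    using assms by (intro sum_mono2 prod_nonneg) (auto simp: S_def finite_PiE)
  also have "\<dots> = (\<Prod>m\<in>UNIV. \<Sum>a\<in>S m. ?h m a)"
    by (rule prod_sum_PiE[symmetric]) (auto simp: S_def assms)
  also have "\<dots> \<le> (\<Prod>m\<in>(UNIV::'n set). 24)"
    by (intro prod_mono conjI sum_nonneg sum_inverse_square_shifted_int_le) (auto simp: S_def assms)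
  finally show ?thesis by simp
qed

lemma norm_mult_decaying_le:
  fixes g :: "real^'n::finite \<Rightarrow> complex" and a :: complex and D M :: nat
  assumes decay: "norm (g z) \<le> C * (1 + infnorm z) powr - real (D + M)"
    and "norm a \<le> A" "0 < R" "0 \<le> T" "0 \<le> C"
    and near: "infnorm z \<le> R \<Longrightarrow> norm a < T"
  shows "norm (a * g z) \<le> C * (T + A / R ^ M) / (1 + infnorm z) ^ D"
proof -
  define u where "u = 1 + infnorm z"
  have "1 \<le> u" by (simp add: u_def infnorm_pos_le)
  have "0 \<le> A" using \<open>norm a \<le> A\<close> norm_ge_zero order_trans by blast
  have damped: "norm a / u ^ M \<le> T + A / R ^ M"
  proof (cases "infnorm z \<le> R")
    case True
    have "norm a / u ^ M \<le> norm a / 1"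
      using one_le_power[OF \<open>1 \<le> u\<close>, of M] by (intro frac_le) auto
    moreover have "0 \<le> A / R ^ M"
      using \<open>0 < R\<close> \<open>0 \<le> A\<close> by simp
    ultimately show ?thesis
      using near[OF True] by linarith
  next
    case False
    then have "R ^ M \<le> u ^ M"
      using \<open>0 < R\<close> by (intro power_mono) (auto simp: u_def)
    then have "norm a / u ^ M \<le> A / R ^ M"
      using \<open>norm a \<le> A\<close> \<open>0 < R\<close> \<open>0 \<le> A\<close> by (intro frac_le) auto
    with \<open>0 \<le> T\<close> show ?thesis by simp
  qed
  have "u powr real (D + M) = u ^ (D + M)"
    using \<open>1 \<le> u\<close> by (intro powr_realpow) auto
  then have "u powr - real (D + M) = 1 / (u ^ D * u ^ M)"
    by (simp only: powr_minus) (simp add: power_add divide_inverse)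
  with decay have "norm (a * g z) \<le> norm a * (C * (1 / (u ^ D * u ^ M)))"
    unfolding norm_mult u_def by (intro mult_left_mono) simp_all
  also have "\<dots> = C * (norm a / u ^ M) / u ^ D"
    by (simp add: field_simps)
  also have "\<dots> \<le> C * (T + A / R ^ M) / u ^ D"
    using \<open>1 \<le> u\<close> \<open>0 \<le> C\<close> by (intro divide_right_mono mult_left_mono damped) auto
  finally show ?thesis by (simp add: u_def)
qed

lemma norm_lattice_series_le:
  fixes g :: "real^'n::finite \<Rightarrow> complex" and c :: "int^'n \<Rightarrow> complex"
  assumes decay: "\<And>z. norm (g z) \<le> C * (1 + infnorm z) powr - real (2 * CARD('n) + M)"
    and bounded: "\<And>k. norm (c k) \<le> A" and "0 < R" and "0 \<le> T"
    and near: "\<And>k. infnorm (y - ivec k) \<le> R \<Longrightarrow> norm (c k) < T"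
  shows "norm (\<Sum>\<^sub>\<infinity>k. c k * g (y - ivec k)) \<le> C * (T + A / R ^ M) * 24 ^ CARD('n)"
proof -
  define K where "K = C * (T + A / R ^ M)"
  define b where "b k = K / (1 + infnorm (y - ivec k)) ^ (2 * CARD('n))" for k
  have "0 \<le> C"
    using decay[of 0] by (simp add: infnorm_0) (meson norm_ge_zero order_trans)
  have "0 \<le> A"
    using bounded[of 0] norm_ge_zero order_trans by blast
  have term_le: "norm (c k * g (y - ivec k)) \<le> b k" for k
    unfolding b_def K_def
    by (rule norm_mult_decaying_le[OF decay bounded \<open>0 < R\<close> \<open>0 \<le> T\<close> \<open>0 \<le> C\<close> near])
  have "0 \<le> K"
    using \<open>0 \<le> C\<close> \<open>0 \<le> A\<close> \<open>0 \<le> T\<close> \<open>0 < R\<close> by (simp add: K_def)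
  then have "0 \<le> b k" for k
    by (simp add: b_def infnorm_pos_le)
  have finite_sums: "sum b G \<le> K * 24 ^ CARD('n)" if "finite G" for G
  proof -
    have "sum b G = K * (\<Sum>k\<in>G. 1 / (1 + infnorm (y - ivec k)) ^ (2 * CARD('n)))"
      by (simp add: b_def sum_distrib_left)
    also have "\<dots> \<le> K * 24 ^ CARD('n)"
      using sum_lattice_inverse_power_le[OF that] \<open>0 \<le> K\<close> by (rule mult_left_mono)
    finally show ?thesis .
  qed
  have b: "b summable_on UNIV"
    using \<open>\<And>k. 0 \<le> b k\<close>
    by (rule nonneg_bdd_above_summable_on) (use finite_sums in \<open>auto intro!: bdd_aboveI\<close>)
  have "(\<lambda>k. c k * g (y - ivec k)) summable_on UNIV"
    by (rule abs_summable_summable, rule summable_on_comparison_test[OF b]) (use term_le in auto)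
  then have "norm (\<Sum>\<^sub>\<infinity>k. c k * g (y - ivec k)) \<le> infsum b UNIV"
    by (rule norm_infsum_le[OF has_sum_infsum has_sum_infsum[OF b]]) (use term_le in auto)
  also have "\<dots> \<le> K * 24 ^ CARD('n)"
    by (rule infsum_le_finite_sums[OF b]) (use finite_sums in auto)
  finally show ?thesis by (simp add: K_def)
qed

section \<open>Growth along blocks of levels\<close>

lemma eventually_powr_bounds_if_log_limit:
  fixes a :: "nat \<Rightarrow> 'a::real_normed_vector" and \<beta> \<epsilon> :: real
  assumes "\<forall>\<^sub>F j in sequentially. a j \<noteq> 0"
    and "((\<lambda>j. log 2 (norm (a j)) / real j) \<longlongrightarrow> \<beta>) sequentially" and "0 < \<epsilon>"
  shows "\<forall>\<^sub>F j in sequentially.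
           2 powr ((\<beta> - \<epsilon>) * j) \<le> norm (a j) \<and> norm (a j) \<le> 2 powr ((\<beta> + \<epsilon>) * j)"
proof -
  have "\<forall>\<^sub>F j in sequentially. dist (log 2 (norm (a j)) / real j) \<beta> < \<epsilon>"
    using assms(2,3) by (rule tendstoD)
  with assms(1) eventually_gt_at_top[of 0] show ?thesis
  proof eventually_elim
    case (elim j)
    define L where "L = log 2 (norm (a j))"
    have "\<bar>L - \<beta> * j\<bar> < \<epsilon> * j"
      using elim by (simp add: L_def dist_real_def abs_less_iff field_simps)
    moreover have "norm (a j) = 2 powr L"
      using elim by (simp add: L_def)
    ultimately show ?case
      by (simp add: algebra_simps abs_less_iff)
  qed
qed

lemma eventually_powr_le_half:
  fixes a b :: real
  assumes "b < a"
  shows "\<forall>\<^sub>F n in sequentially. 2 powr (b * n) \<le> 2 powr (a * n) / 2"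
proof -
  define c where "c = a - b"
  have "0 < c" using assms by (simp add: c_def)
  then have "((\<lambda>n::nat. 2 powr (- c * n)) \<longlongrightarrow> 0) sequentially"
    by real_asymp
  then have "\<forall>\<^sub>F n in sequentially. 2 powr (- c * n) < 1 / 2"
    by (rule order_tendstoD) simp
  then show ?thesis
  proof eventually_elim
    case (elim n)
    have "2 powr (b * n) = 2 powr (a * n) * 2 powr (- c * n)"
      by (simp add: c_def algebra_simps flip: powr_add)
    also have "\<dots> \<le> 2 powr (a * n) * (1 / 2)"
      using elim by (intro mult_left_mono) auto
    finally show ?case by simp
  qed
qed

lemma eventually_powr_bounds_at_block_ends:
  fixes a :: "nat \<Rightarrow> 'a::real_normed_vector" and m :: nat and \<beta> \<epsilon> :: real
  assumes "\<forall>\<^sub>F j in sequentially.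
      2 powr ((\<beta> - \<epsilon>) * j) \<le> norm (a j) \<and> norm (a j) \<le> 2 powr ((\<beta> + \<epsilon>) * j)"
    and "1 \<le> m"
  shows "\<forall>\<^sub>F n in sequentially.
      2 powr ((\<beta> - \<epsilon>) * m * n) \<le> norm (a (m * n)) \<and> norm (a (m * n)) \<le> 2 powr ((\<beta> + \<epsilon>) * m * n)
      \<and> 2 powr ((\<beta> - \<epsilon>) * (m + 1) * n) \<le> norm (a (m * n + n))
      \<and> norm (a (m * n + n)) \<le> 2 powr ((\<beta> + \<epsilon>) * (m + 1) * n)"
proof -
  obtain j0 where j0: "\<And>j. j0 \<le> j \<Longrightarrow>
      2 powr ((\<beta> - \<epsilon>) * j) \<le> norm (a j) \<and> norm (a j) \<le> 2 powr ((\<beta> + \<epsilon>) * j)"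
    using assms(1) by (auto simp: eventually_sequentially)
  show ?thesis
    using eventually_ge_at_top[of j0]
  proof eventually_elim
    case (elim n)
    then have "j0 \<le> m * n"
      using \<open>1 \<le> m\<close> by (metis le_trans mult_1 mult_le_mono1)
    then show ?case
      using j0[of "m * n"] j0[of "m * n + n"] by (simp add: mult.assoc distrib_right add.commute)
  qed
qed

lemma eventually_block_increment_ge:
  fixes a :: "nat \<Rightarrow> 'a::real_normed_vector" and m :: nat and \<beta> \<epsilon> :: real
  assumes "\<forall>\<^sub>F j in sequentially. a j \<noteq> 0"
    and "((\<lambda>j. log 2 (norm (a j)) / real j) \<longlongrightarrow> \<beta>) sequentially"
    and "0 < \<epsilon>" "1 \<le> m" "\<epsilon> * (2 * m + 2) \<le> \<bar>\<beta>\<bar>"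
  shows "\<forall>\<^sub>F n in sequentially. 2 powr ((\<beta> - \<epsilon>) * (m + 1) * n) / 2 \<le> norm (a (m * n + n) - a (m * n))"
proof -
  note bounds = eventually_powr_bounds_at_block_ends[OF
      eventually_powr_bounds_if_log_limit[OF assms(1-3)] \<open>1 \<le> m\<close>]
  have "0 < \<epsilon> * (2 * m + 2)"
    using assms(3) by simp
  with assms(5) consider "0 < \<beta>" | "\<beta> < 0"
    by fastforce
  then show ?thesis
  proof cases
    case 1
    with assms(5) have "(\<beta> + \<epsilon>) * m < (\<beta> - \<epsilon>) * (m + 1)"
      using assms(3) by (simp add: algebra_simps)
    then have "\<forall>\<^sub>F n in sequentially.
        2 powr ((\<beta> + \<epsilon>) * m * n) \<le> 2 powr ((\<beta> - \<epsilon>) * (m + 1) * n) / 2"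
      by (rule eventually_powr_le_half)
    with bounds show ?thesis
    proof eventually_elim
      case (elim n)
      then show ?case
        using norm_triangle_ineq2[of "a (m * n + n)" "a (m * n)"] by (simp add: mult.assoc)
    qed
  next
    case 2
    with assms(5) have "(\<beta> + \<epsilon>) * (m + 1) < (\<beta> - \<epsilon>) * m"
      using assms(3) by (simp add: algebra_simps)
    then have "\<forall>\<^sub>F n in sequentially.
        2 powr ((\<beta> + \<epsilon>) * (m + 1) * n) \<le> 2 powr ((\<beta> - \<epsilon>) * m * n) / 2"
      by (rule eventually_powr_le_half)
    with bounds show ?thesis
    proof eventually_elim
      case (elim n)
      have "0 \<le> (\<epsilon> - \<beta>) * n"
        using 2 assms(3) by simp
      then have "(\<beta> - \<epsilon>) * (m + 1) * n \<le> (\<beta> - \<epsilon>) * m * n"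
        by (simp add: algebra_simps)
      then have "2 powr ((\<beta> - \<epsilon>) * (m + 1) * n) \<le> 2 powr ((\<beta> - \<epsilon>) * m * n)"
        by simp
      then show ?case
        using elim norm_triangle_ineq2[of "a (m * n)" "a (m * n + n)"]
          norm_minus_commute[of "a (m * n)" "a (m * n + n)"]
        by linarith
    qed
  qed
qed

section \<open>Wavelet coefficients of Besov functions\<close>

lemma card_norm_ge_le_infsum:
  fixes a :: "'a \<Rightarrow> 'b::real_normed_vector"
  assumes summable: "(\<lambda>k. norm (a k) powr p) summable_on UNIV" and "0 < p" "0 < T"
  shows "finite {k. T \<le> norm (a k)}"
    and "real (card {k. T \<le> norm (a k)}) * T powr p \<le> (\<Sum>\<^sub>\<infinity>k. norm (a k) powr p)"
proof -
  let ?A = "{k. T \<le> norm (a k)}" and ?S = "\<Sum>\<^sub>\<infinity>k. norm (a k) powr p"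
  have finite_subsets: "real (card G) * T powr p \<le> ?S" if "finite G" "G \<subseteq> ?A" for G
  proof -
    have "real (card G) * T powr p = (\<Sum>k\<in>G. T powr p)" by simp
    also have "\<dots> \<le> (\<Sum>k\<in>G. norm (a k) powr p)"
      using that \<open>0 < T\<close> \<open>0 < p\<close> by (intro sum_mono powr_mono2) auto
    also have "\<dots> \<le> ?S"
      using summable that(1) by (rule finite_sum_le_infsum) auto
    finally show ?thesis .
  qed
  show "finite ?A"
  proof (rule ccontr)
    assume "infinite ?A"
    then obtain G where G: "finite G" "card G = nat \<lceil>?S / T powr p\<rceil> + 1" "G \<subseteq> ?A"
      using infinite_arbitrarily_large by blast
    from finite_subsets[OF G(1,3)] have "(real (nat \<lceil>?S / T powr p\<rceil>) + 1) * T powr p \<le> ?S"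
      by (simp add: G(2) add.commute)
    moreover have "?S / T powr p < real (nat \<lceil>?S / T powr p\<rceil>) + 1"
      by linarith
    ultimately show False
      using \<open>0 < T\<close> by (simp add: divide_less_eq)
  qed
  then show "real (card ?A) * T powr p \<le> ?S"
    using finite_subsets by simp
qed

lemma powr_of_scaled_two_powr:
  fixes B p d s x :: real
  assumes "0 \<le> B" "0 < p"
  shows "(B * 2 powr ((d / p - s) * x)) powr p = B powr p * 2 powr ((d - s * p) * x)"
proof -
  have "(B * 2 powr ((d / p - s) * x)) powr p = B powr p * 2 powr ((d / p - s) * x * p)"
    using \<open>0 \<le> B\<close> by (simp add: powr_mult powr_powr)
  also have "(d / p - s) * x * p = (d - s * p) * x"
    using \<open>0 < p\<close> by (simp add: field_simps)
  finally show ?thesis .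
qed

definition wav_level_sum :: "(nat \<Rightarrow> real^'n::finite \<Rightarrow> complex) \<Rightarrow> (real^'n \<Rightarrow> complex) \<Rightarrow> real \<Rightarrow> nat \<Rightarrow> real"
  where "wav_level_sum \<psi> f p l = (\<Sum>i\<in>wav_idx TYPE('n). \<Sum>\<^sub>\<infinity>k. norm (wav_coef \<psi> f i l k) powr p)"

lemma besov_inf_wav_level_sum_le:
  fixes \<phi> :: "real^'n::finite \<Rightarrow> complex"
  assumes "f \<in> besov_inf \<phi> \<psi> s p" and "0 < p"
  obtains B where "0 \<le> B" and "\<And>l. wav_level_sum \<psi> f p l \<le> B powr p * 2 powr ((real CARD('n) - s * p) * l)"
proof -
  let ?S = "wav_level_sum \<psi> f p"
  from assms(1) have "bdd_above (range (\<lambda>l. 2 powr ((s - real CARD('n) / p) * l) * ?S l powr (1 / p)))"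
    by (simp add: besov_inf_def wav_level_sum_def)
  then obtain B where B: "\<And>l. 2 powr ((s - real CARD('n) / p) * l) * ?S l powr (1 / p) \<le> B"
    by (auto simp: bdd_above_def)
  have "0 \<le> ?S l" for l
    by (simp add: wav_level_sum_def sum_nonneg infsum_nonneg)
  have root: "?S l powr (1 / p) \<le> B * 2 powr ((real CARD('n) / p - s) * l)" for l
  proof -
    have "?S l powr (1 / p) = 2 powr ((real CARD('n) / p - s) * l)
        * (2 powr ((s - real CARD('n) / p) * l) * ?S l powr (1 / p))"
      by (simp add: algebra_simps flip: powr_add)
    also have "\<dots> \<le> 2 powr ((real CARD('n) / p - s) * l) * B"
      using B by (rule mult_left_mono) simp
    finally show ?thesis by (simp add: mult.commute)
  qed
  have "0 \<le> B * 2 powr ((real CARD('n) / p - s) * real 0)"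
    using powr_ge_zero root[of 0] by (rule order_trans)
  then have "0 \<le> B" by simp
  moreover have "?S l \<le> B powr p * 2 powr ((real CARD('n) - s * p) * l)" for l
  proof -
    have "?S l = (?S l powr (1 / p)) powr p"
      using \<open>0 \<le> ?S l\<close> \<open>0 < p\<close> by (simp add: powr_powr)
    also have "\<dots> \<le> (B * 2 powr ((real CARD('n) / p - s) * l)) powr p"
      using root \<open>0 < p\<close> by (intro powr_mono2) auto
    also have "\<dots> = B powr p * 2 powr ((real CARD('n) - s * p) * l)"
      using \<open>0 \<le> B\<close> \<open>0 < p\<close> by (rule powr_of_scaled_two_powr)
    finally show ?thesis .
  qed
  ultimately show thesis by (rule that)
qed

lemma besov_inf_wav_coef_bounds:
  fixes \<phi> :: "real^'n::finite \<Rightarrow> complex"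
  assumes "f \<in> besov_inf \<phi> \<psi> s p" and "0 < p"
  obtains B where "0 \<le> B"
    and "\<And>i l k. i \<in> wav_idx TYPE('n) \<Longrightarrow>
           norm (wav_coef \<psi> f i l k) \<le> B * 2 powr ((real CARD('n) / p - s) * l)"
    and "\<And>l T. 0 < T \<Longrightarrow>
           finite {(i, k). i \<in> wav_idx TYPE('n) \<and> T \<le> norm (wav_coef \<psi> f i l k)}"
    and "\<And>l T. 0 < T \<Longrightarrow>
           real (card {(i, k). i \<in> wav_idx TYPE('n) \<and> T \<le> norm (wav_coef \<psi> f i l k)}) * T powr p
             \<le> B powr p * 2 powr ((real CARD('n) - s * p) * l)"
proof -
  let ?I = "wav_idx TYPE('n)" and ?S = "wav_level_sum \<psi> f p"
  obtain B where "0 \<le> B" and level: "\<And>l. ?S l \<le> B powr p * 2 powr ((real CARD('n) - s * p) * l)"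
    using besov_inf_wav_level_sum_le[OF assms] by blast
  have "finite ?I" by (simp add: wav_idx_def)
  from assms(1) have summable: "\<And>i l. i \<in> ?I \<Longrightarrow> (\<lambda>k. norm (wav_coef \<psi> f i l k) powr p) summable_on UNIV"
    by (simp add: besov_inf_def)
  show ?thesis
  proof
    show "0 \<le> B" by fact
  next
    fix i l k assume i: "i \<in> ?I"
    have "norm (wav_coef \<psi> f i l k) powr p \<le> (\<Sum>\<^sub>\<infinity>k. norm (wav_coef \<psi> f i l k) powr p)"
      using summable[OF i] by (intro finite_sum_le_infsum[where B = "{k}", simplified]) auto
    also have "\<dots> \<le> ?S l"
      unfolding wav_level_sum_def using i \<open>finite ?I\<close>
      by (intro member_le_sum) (auto intro: infsum_nonneg)
    also have "\<dots> \<le> (B * 2 powr ((real CARD('n) / p - s) * l)) powr p"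
      using level[of l] powr_of_scaled_two_powr[OF \<open>0 \<le> B\<close> \<open>0 < p\<close>] by simp
    finally have le: "norm (wav_coef \<psi> f i l k) powr p \<le> (B * 2 powr ((real CARD('n) / p - s) * l)) powr p" .
    have "(norm (wav_coef \<psi> f i l k) powr p) powr (1 / p)
        \<le> ((B * 2 powr ((real CARD('n) / p - s) * l)) powr p) powr (1 / p)"
      by (rule powr_mono2[OF _ _ le]) (use \<open>0 < p\<close> in auto)
    moreover have "(x powr p) powr (1 / p) = x" if "0 \<le> x" for x :: real
      using that \<open>0 < p\<close> by (simp add: powr_powr)
    ultimately show "norm (wav_coef \<psi> f i l k) \<le> B * 2 powr ((real CARD('n) / p - s) * l)"
      using \<open>0 \<le> B\<close> by simp
  next
    fix l and T :: real assume "0 < T"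
    have pairs: "{(i, k). i \<in> ?I \<and> T \<le> norm (wav_coef \<psi> f i l k)}
        = (SIGMA i:?I. {k. T \<le> norm (wav_coef \<psi> f i l k)})"
      by auto
    have finite_fibres: "finite {k. T \<le> norm (wav_coef \<psi> f i l k)}" if "i \<in> ?I" for i
      using card_norm_ge_le_infsum(1)[OF summable[OF that] \<open>0 < p\<close> \<open>0 < T\<close>] .
    then show "finite {(i, k). i \<in> ?I \<and> T \<le> norm (wav_coef \<psi> f i l k)}"
      unfolding pairs using \<open>finite ?I\<close> by auto
    have "real (card (SIGMA i:?I. {k. T \<le> norm (wav_coef \<psi> f i l k)})) * T powr p
        = (\<Sum>i\<in>?I. real (card {k. T \<le> norm (wav_coef \<psi> f i l k)}) * T powr p)"
      using finite_fibres \<open>finite ?I\<close> by (simp add: card_SigmaI sum_distrib_right)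
    also have "\<dots> \<le> ?S l"
      unfolding wav_level_sum_def
      by (intro sum_mono card_norm_ge_le_infsum(2) summable \<open>0 < p\<close> \<open>0 < T\<close>)
    finally show "real (card {(i, k). i \<in> ?I \<and> T \<le> norm (wav_coef \<psi> f i l k)}) * T powr p
        \<le> B powr p * 2 powr ((real CARD('n) - s * p) * l)"
      unfolding pairs using level by (rule order_trans)
  qed
qed

lemma uniform_fast_decay:
  fixes g :: "'i \<Rightarrow> real^'n::finite \<Rightarrow> complex"
  assumes "finite I" and "\<And>i. i \<in> I \<Longrightarrow> fast_decay (g i)"
  shows "\<exists>C. \<forall>i\<in>I. \<forall>z. norm (g i z) \<le> C * (1 + infnorm z) powr - real N"
proof -
  have "\<forall>i\<in>I. \<exists>c. \<forall>z. norm (g i z) \<le> c * (1 + infnorm z) powr - real N"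
    using assms(2) unfolding fast_decay_def by blast
  then obtain C where C: "\<And>i z. i \<in> I \<Longrightarrow> norm (g i z) \<le> C i * (1 + infnorm z) powr - real N"
    by metis
  have "norm (g i z) \<le> (\<Sum>j\<in>I. \<bar>C j\<bar>) * (1 + infnorm z) powr - real N" if "i \<in> I" for i z
  proof -
    have "C i \<le> (\<Sum>j\<in>I. \<bar>C j\<bar>)"
      using member_le_sum[OF that _ assms(1), of "\<lambda>j. \<bar>C j\<bar>"] by simp
    then show ?thesis
      using C[OF that, of z] by (smt (verit) mult_right_mono powr_ge_zero)
  qed
  then show ?thesis by blast
qed

lemma norm_Qop_le:
  fixes \<psi> :: "nat \<Rightarrow> real^'n::finite \<Rightarrow> complex"
  assumes decay: "\<And>i z. i \<in> wav_idx TYPE('n) \<Longrightarrow>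
      norm (\<psi> i z) \<le> C * (1 + infnorm z) powr - real (2 * CARD('n) + M)"
    and bounded: "\<And>i k. i \<in> wav_idx TYPE('n) \<Longrightarrow> norm (wav_coef \<psi> f i l k) \<le> A"
    and "0 < R" "0 \<le> T"
    and near: "\<And>i k. i \<in> wav_idx TYPE('n) \<Longrightarrow> infnorm ((2::real) ^ l *\<^sub>R x - ivec k) \<le> R \<Longrightarrow>
      norm (wav_coef \<psi> f i l k) < T"
  shows "norm (Qop \<psi> f l x) \<le> card (wav_idx TYPE('n)) * (C * (T + A / R ^ M) * 24 ^ CARD('n))"
proof -
  have "norm (Qop \<psi> f l x) \<le> (\<Sum>i\<in>wav_idx TYPE('n). norm (\<Sum>\<^sub>\<infinity>k. wav_coef \<psi> f i l k * wav_fun \<psi> i l k x))"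
    unfolding Qop_def by (rule norm_sum)
  also have "\<dots> \<le> (\<Sum>i\<in>wav_idx TYPE('n). C * (T + A / R ^ M) * 24 ^ CARD('n))"
    unfolding wav_fun_def
    by (intro sum_mono norm_lattice_series_le decay bounded near \<open>0 < R\<close> \<open>0 \<le> T\<close>)
  finally show ?thesis by simp
qed

lemma exists_norm_ge_average:
  fixes Q :: "nat \<Rightarrow> 'a::real_normed_vector"
  assumes "1 \<le> n" and "X \<le> norm (\<Sum>l\<in>{a..<a + n}. Q l)"
  shows "\<exists>l\<in>{a..<a + n}. X / n \<le> norm (Q l)"
proof (rule ccontr)
  assume "\<not> ?thesis"
  then have "norm (\<Sum>l\<in>{a..<a + n}. Q l) < (\<Sum>l\<in>{a..<a + n}. X / n)"
    using assms(1) by (intro le_less_trans[OF norm_sum] sum_strict_mono) (auto simp: not_le)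
  with assms show False by simp
qed

lemma eventually_level_set_block_ge:
  fixes \<phi> :: "real^'n::finite \<Rightarrow> complex" and m :: nat and \<beta> \<epsilon> :: real
  assumes "x \<in> level_set \<phi> \<psi> \<beta> f" and "0 < \<epsilon>" "1 \<le> m" "\<epsilon> * (2 * m + 2) \<le> \<bar>\<beta>\<bar>"
  shows "\<forall>\<^sub>F n in sequentially.
           2 powr ((\<beta> - \<epsilon>) * (m + 1) * n) / 2 \<le> norm (\<Sum>l\<in>{m * n..<m * n + n}. Qop \<psi> f l x)"
proof -
  let ?Q = "\<lambda>l. Qop \<psi> f l x"
  have block: "(\<Sum>l<m * n + n. ?Q l) - (\<Sum>l<m * n. ?Q l) = (\<Sum>l\<in>{m * n..<m * n + n}. ?Q l)" for n
    using sum_diff_nat_ivl[of 0 "m * n" "m * n + n" ?Q] by (simp add: atLeast0LessThan)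
  consider "0 < \<beta>" | "\<beta> < 0" | "\<beta> = 0" by linarith
  then show ?thesis
  proof cases
    case 1
    with assms(1) have "\<forall>\<^sub>F j in sequentially. Pop \<phi> \<psi> f j x \<noteq> 0"
      and "((\<lambda>j. log 2 (norm (Pop \<phi> \<psi> f j x)) / real j) \<longlongrightarrow> \<beta>) sequentially"
      by (auto simp: level_set_def)
    from eventually_block_increment_ge[OF this assms(2-4)] show ?thesis
      by (simp add: Pop_def block)
  next
    case 2
    with assms(1) have "convergent (\<lambda>j. Pop \<phi> \<psi> f j x)"
      and "\<forall>\<^sub>F j in sequentially. Rop \<psi> f j x \<noteq> 0"
      and "((\<lambda>j. log 2 (norm (Rop \<psi> f j x)) / real j) \<longlongrightarrow> \<beta>) sequentially"
      by (auto simp: level_set_def)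
    from \<open>convergent _\<close> have "summable ?Q"
      by (simp add: Pop_def summable_iff_convergent convergent_add_const_iff)
    then have Rop_eq: "Rop \<psi> f j x = suminf ?Q - (\<Sum>l<j. ?Q l)" for j
      unfolding Rop_def using suminf_minus_initial_segment[of ?Q j] by (simp add: add.commute)
    from eventually_block_increment_ge[OF \<open>\<forall>\<^sub>F j in _. _\<close> \<open>(_ \<longlongrightarrow> _) _\<close> assms(2-4)]
    show ?thesis
      by (simp add: Rop_eq block[symmetric] norm_minus_commute)
  next
    case 3
    have "0 < \<epsilon> * (2 * m + 2)"
      using assms(2) by simp
    with assms(4) 3 show ?thesis by simp
  qed
qed

section \<open>Covering the level sets\<close>

lemma powr_quotient_le_powr:
  fixes \<kappa> \<tau> \<eta> :: real and l m n M :: nat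
  assumes "m * n \<le> l" "1 \<le> m" "\<bar>\<kappa>\<bar> + \<bar>\<tau>\<bar> \<le> \<eta> * M"
  shows "2 powr (\<kappa> * l) / (2 powr (\<eta> * l)) ^ M \<le> 2 powr (\<tau> * n)"
proof -
  have "n \<le> l"
    using assms(1,2) by (metis le_trans mult_1 mult_le_mono1)
  have "(\<kappa> - \<eta> * M) * l \<le> - \<bar>\<tau>\<bar> * l"
    using assms(3) by (intro mult_right_mono) auto
  also have "\<dots> \<le> - \<bar>\<tau>\<bar> * n"
    using \<open>n \<le> l\<close> by (simp add: mult_left_mono)
  also have "\<dots> \<le> \<tau> * n"
    by (intro mult_right_mono) auto
  finally have "(\<kappa> - \<eta> * M) * l \<le> \<tau> * n" .
  moreover have "2 powr (\<kappa> * l) / (2 powr (\<eta> * l)) ^ M = 2 powr ((\<kappa> - \<eta> * M) * l)"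
    by (simp add: powr_power powr_diff algebra_simps)
  ultimately show ?thesis by simp
qed

text \<open>The condition on \<open>k\<close> says that the dyadic cube \<open>(l, k)\<close> lies within distance about
  \<open>2 powr ((\<eta> - 1) l)\<close> of \<open>x\<close>.\<close>
definition large_coef_nearby ::
    "(nat \<Rightarrow> real^'n::finite \<Rightarrow> complex) \<Rightarrow> (real^'n \<Rightarrow> complex) \<Rightarrow> real \<Rightarrow> real \<Rightarrow> nat \<Rightarrow> nat \<Rightarrow> real^'n \<Rightarrow> bool"
  where
  "large_coef_nearby \<psi> f \<eta> \<tau> m n x \<longleftrightarrow>
     (\<exists>l\<in>{m * n..<m * n + n}. \<exists>i\<in>wav_idx TYPE('n). \<exists>k.
        infnorm ((2::real) ^ l *\<^sub>R x - ivec k) \<le> 2 powr (\<eta> * l) \<and> 2 powr (\<tau> * n) \<le> norm (wav_coef \<psi> f i l k))"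

lemma norm_Qop_le_if_no_large_coef_nearby:
  fixes \<psi> :: "nat \<Rightarrow> real^'n::finite \<Rightarrow> complex" and l m n M :: nat and C \<kappa> \<tau> \<eta> :: real
  assumes decay: "\<And>i z. i \<in> wav_idx TYPE('n) \<Longrightarrow>
      norm (\<psi> i z) \<le> C * (1 + infnorm z) powr - real (2 * CARD('n) + M)"
    and coef: "\<And>i l k. i \<in> wav_idx TYPE('n) \<Longrightarrow> norm (wav_coef \<psi> f i l k) \<le> B * 2 powr (\<kappa> * l)"
    and "0 \<le> B" "1 \<le> m" "\<bar>\<kappa>\<bar> + \<bar>\<tau>\<bar> \<le> \<eta> * M"
    and l: "l \<in> {m * n..<m * n + n}" and "\<not> large_coef_nearby \<psi> f \<eta> \<tau> m n x"
  shows "norm (Qop \<psi> f l x) \<le> \<bar>card (wav_idx TYPE('n)) * C * 24 ^ CARD('n)\<bar> * ((1 + B) * 2 powr (\<tau> * n))"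
proof -
  define T where "T = 2 powr (\<tau> * n)"
  define R where "R = 2 powr (\<eta> * l)"
  define K where "K = card (wav_idx TYPE('n)) * C * 24 ^ CARD('n)"
  have near: "norm (wav_coef \<psi> f i l k) < T"
    if "i \<in> wav_idx TYPE('n)" "infnorm ((2::real) ^ l *\<^sub>R x - ivec k) \<le> R" for i k
    using assms(7) l that unfolding large_coef_nearby_def T_def R_def by force
  have "norm (Qop \<psi> f l x) \<le> card (wav_idx TYPE('n)) * (C * (T + B * 2 powr (\<kappa> * l) / R ^ M) * 24 ^ CARD('n))"
    by (intro norm_Qop_le decay coef near) (auto simp: T_def R_def)
  also have "\<dots> = K * (T + B * (2 powr (\<kappa> * l) / R ^ M))"
    by (simp add: K_def)
  also have "\<dots> \<le> \<bar>K\<bar> * (T + B * T)"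
  proof (rule mult_mono)
    have "2 powr (\<kappa> * l) / R ^ M \<le> T"
      unfolding T_def R_def using l assms(4,5) by (intro powr_quotient_le_powr) auto
    then show "T + B * (2 powr (\<kappa> * l) / R ^ M) \<le> T + B * T"
      using \<open>0 \<le> B\<close> by (intro add_left_mono mult_left_mono)
  qed (use \<open>0 \<le> B\<close> in \<open>auto simp: T_def R_def\<close>)
  finally show ?thesis
    by (simp add: K_def T_def algebra_simps)
qed

lemma eventually_large_coef_nearby:
  fixes \<psi> :: "nat \<Rightarrow> real^'n::finite \<Rightarrow> complex" and m M :: nat and C \<kappa> \<eta> \<beta> \<epsilon> :: real
  assumes x: "x \<in> level_set \<phi> \<psi> \<beta> f"
    and decay: "\<And>i z. i \<in> wav_idx TYPE('n) \<Longrightarrow>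
      norm (\<psi> i z) \<le> C * (1 + infnorm z) powr - real (2 * CARD('n) + M)"
    and coef: "\<And>i l k. i \<in> wav_idx TYPE('n) \<Longrightarrow> norm (wav_coef \<psi> f i l k) \<le> B * 2 powr (\<kappa> * l)"
    and "0 \<le> B" "0 < \<epsilon>" "1 \<le> m" "\<epsilon> * (2 * m + 2) \<le> \<bar>\<beta>\<bar>"
    and "\<bar>\<kappa>\<bar> + \<bar>(\<beta> - 2 * \<epsilon>) * (m + 1)\<bar> \<le> \<eta> * M"
  shows "\<forall>\<^sub>F n in sequentially. large_coef_nearby \<psi> f \<eta> ((\<beta> - 2 * \<epsilon>) * (m + 1)) m n x"
proof -
  define \<tau> where "\<tau> = (\<beta> - 2 * \<epsilon>) * (m + 1)"
  define K where "K = \<bar>card (wav_idx TYPE('n)) * C * 24 ^ CARD('n)\<bar>"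
  define c where "c = \<epsilon> * (m + 1)"
  have "0 < c" using \<open>0 < \<epsilon>\<close> by (simp add: c_def)
  then have "(\<lambda>n::nat. 2 * K * (1 + B) * n / 2 powr (c * n)) \<longlonglongrightarrow> 0"
    by real_asymp
  then have "\<forall>\<^sub>F n in sequentially. 2 * K * (1 + B) * n / 2 powr (c * n) < 1"
    by (rule order_tendstoD) simp
  moreover note eventually_level_set_block_ge[OF x assms(5-7)]
  moreover note eventually_ge_at_top[of 1]
  ultimately show ?thesis
  proof eventually_elim
    case (elim n)
    show ?case
    proof (rule ccontr)
      assume "\<not> ?case"
      obtain l where l: "l \<in> {m * n..<m * n + n}"
        and "2 powr ((\<beta> - \<epsilon>) * (m + 1) * n) / 2 / n \<le> norm (Qop \<psi> f l x)"
        using exists_norm_ge_average[OF \<open>1 \<le> n\<close> elim(2)] by blast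
      note this(2)
      also have "\<dots> \<le> K * ((1 + B) * 2 powr (\<tau> * n))"
        unfolding K_def \<tau>_def
        by (rule norm_Qop_le_if_no_large_coef_nearby[OF decay coef])
          (use assms(4,6,8) l \<open>\<not> ?case\<close> in auto)
      also have "\<dots> < 2 powr (\<tau> * n) * 2 powr (c * n) / 2 / n"
      proof -
        have "2 * K * (1 + B) * n < 2 powr (c * n)"
          using elim(1) by (simp add: field_simps)
        then have "2 * K * (1 + B) * n * 2 powr (\<tau> * n) < 2 powr (c * n) * 2 powr (\<tau> * n)"
          by (rule mult_strict_right_mono) simp
        with \<open>1 \<le> n\<close> show ?thesis
          by (simp add: field_simps)
      qed
      also have "2 powr (\<tau> * n) * 2 powr (c * n) = 2 powr ((\<beta> - \<epsilon>) * (m + 1) * n)"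
        by (simp add: \<tau>_def c_def algebra_simps flip: powr_add)
      finally show False by simp
    qed
  qed
qed

lemma dist_dyadic_point_le:
  fixes x :: "real^'n::finite" and \<eta> :: real and l m n :: nat
  assumes "infnorm ((2::real) ^ l *\<^sub>R x - ivec k) \<le> 2 powr (\<eta> * l)" "\<eta> \<le> 1" "m * n \<le> l"
  shows "dist (inverse ((2::real) ^ l) *\<^sub>R ivec k) x \<le> sqrt CARD('n) * 2 powr (- ((1 - \<eta>) * m) * n)"
proof -
  have "x - inverse ((2::real) ^ l) *\<^sub>R ivec k = inverse ((2::real) ^ l) *\<^sub>R ((2::real) ^ l *\<^sub>R x - ivec k)"
    by (simp add: algebra_simps)
  then have "dist (inverse ((2::real) ^ l) *\<^sub>R ivec k) x = inverse (2 ^ l) * norm ((2::real) ^ l *\<^sub>R x - ivec k)"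
    by (simp add: dist_norm norm_minus_commute)
  also have "\<dots> \<le> inverse (2 ^ l) * (sqrt CARD('n) * 2 powr (\<eta> * l))"
  proof (rule mult_left_mono)
    have "norm ((2::real) ^ l *\<^sub>R x - ivec k) \<le> sqrt CARD('n) * infnorm ((2::real) ^ l *\<^sub>R x - ivec k)"
      using norm_le_infnorm[of "(2::real) ^ l *\<^sub>R x - ivec k"] by simp
    with assms(1) show "norm ((2::real) ^ l *\<^sub>R x - ivec k) \<le> sqrt CARD('n) * 2 powr (\<eta> * l)"
      by (meson mult_left_mono order_trans real_sqrt_ge_zero of_nat_0_le_iff)
  qed simp
  also have "\<dots> = sqrt CARD('n) * 2 powr ((\<eta> - 1) * l)"
    by (simp add: powr_realpow[symmetric] powr_minus[symmetric] algebra_simps flip: powr_add)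
  also have "\<dots> \<le> sqrt CARD('n) * 2 powr (- ((1 - \<eta>) * m) * n)"
  proof -
    have "(\<eta> - 1) * l \<le> (\<eta> - 1) * (m * n)"
      using assms(2,3) by (intro mult_left_mono_neg) (auto simp flip: of_nat_mult)
    then show ?thesis
      by (simp add: algebra_simps)
  qed
  finally show ?thesis .
qed

lemma linear_le_on_block:
  fixes \<rho> :: real and l m n :: nat
  assumes "l \<in> {m * n..<m * n + n}"
  shows "\<rho> * l \<le> (\<rho> * (m + 1) + \<bar>\<rho>\<bar>) * n"
proof (cases "0 \<le> \<rho>")
  case True
  then have "\<rho> * l \<le> \<rho> * ((m + 1) * n)"
    using assms by (intro mult_left_mono) (auto simp flip: of_nat_mult)
  moreover have "(\<rho> * (m + 1) + \<bar>\<rho>\<bar>) * n = \<rho> * ((m + 1) * n) + \<bar>\<rho>\<bar> * n"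
    by (simp add: algebra_simps)
  moreover have "0 \<le> \<bar>\<rho>\<bar> * n" by simp
  ultimately show ?thesis by linarith
next
  case False
  then have "\<rho> * l \<le> \<rho> * (m * n)"
    using assms by (intro mult_left_mono_neg) (auto simp flip: of_nat_mult)
  with False show ?thesis by (simp add: algebra_simps)
qed

lemma card_large_coef_block_le:
  fixes \<psi> :: "nat \<Rightarrow> real^'n::finite \<Rightarrow> complex" and m n :: nat and \<rho> \<tau> p A :: real
  assumes finite: "\<And>l T. 0 < T \<Longrightarrow> finite {(i, k). i \<in> wav_idx TYPE('n) \<and> T \<le> norm (wav_coef \<psi> f i l k)}"
    and card: "\<And>l T. 0 < T \<Longrightarrow>
      real (card {(i, k). i \<in> wav_idx TYPE('n) \<and> T \<le> norm (wav_coef \<psi> f i l k)}) * T powr p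
        \<le> A * 2 powr (\<rho> * l)"
  shows "real (card (SIGMA l:{m * n..<m * n + n}.
           {(i, k). i \<in> wav_idx TYPE('n) \<and> 2 powr (\<tau> * n) \<le> norm (wav_coef \<psi> f i l k)}))
         \<le> A * 2 powr ((1 + \<rho> * (m + 1) + \<bar>\<rho>\<bar> - \<tau> * p) * n)"
proof -
  define T where "T = 2 powr (\<tau> * n)"
  define Z where "Z l = {(i, k). i \<in> wav_idx TYPE('n) \<and> T \<le> norm (wav_coef \<psi> f i l k)}" for l
  have "0 < T" by (simp add: T_def)
  have "0 \<le> A"
    using card[of 1 0] by (smt (verit) of_nat_0_le_iff powr_gt_zero zero_le_mult_iff)
  have "card (SIGMA l:{m * n..<m * n + n}. Z l) = (\<Sum>l\<in>{m * n..<m * n + n}. card (Z l))"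
    using finite[OF \<open>0 < T\<close>] by (intro card_SigmaI) (auto simp: Z_def)
  then have "real (card (SIGMA l:{m * n..<m * n + n}. Z l)) = (\<Sum>l\<in>{m * n..<m * n + n}. real (card (Z l)))"
    by simp
  also have "\<dots> \<le> (\<Sum>l\<in>{m * n..<m * n + n}. A * 2 powr ((\<rho> * (m + 1) + \<bar>\<rho>\<bar>) * n) / T powr p)"
  proof (rule sum_mono)
    fix l assume "l \<in> {m * n..<m * n + n}"
    then have "\<rho> * l \<le> (\<rho> * (m + 1) + \<bar>\<rho>\<bar>) * n"
      by (rule linear_le_on_block)
    then have "A * 2 powr (\<rho> * l) \<le> A * 2 powr ((\<rho> * (m + 1) + \<bar>\<rho>\<bar>) * n)"
      using \<open>0 \<le> A\<close> by (intro mult_left_mono) auto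
    with card[OF \<open>0 < T\<close>, of l] \<open>0 < T\<close>
    show "real (card (Z l)) \<le> A * 2 powr ((\<rho> * (m + 1) + \<bar>\<rho>\<bar>) * n) / T powr p"
      by (simp add: Z_def le_divide_eq)
  qed
  also have "\<dots> = n * (A * 2 powr ((\<rho> * (m + 1) + \<bar>\<rho>\<bar>) * n - \<tau> * p * n))"
    by (simp add: T_def powr_powr powr_diff mult_ac)
  also have "\<dots> \<le> 2 powr n * (A * 2 powr ((\<rho> * (m + 1) + \<bar>\<rho>\<bar>) * n - \<tau> * p * n))"
    using of_nat_less_two_power[of n] \<open>0 \<le> A\<close>
    by (intro mult_right_mono) (simp_all add: powr_realpow)
  also have "\<dots> = A * 2 powr ((1 + \<rho> * (m + 1) + \<bar>\<rho>\<bar> - \<tau> * p) * n)"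
    by (simp add: algebra_simps flip: powr_add)
  finally show ?thesis
    by (simp add: Z_def T_def)
qed

lemma packing_premeasure_large_coef_nearby_eq_0:
  fixes \<psi> :: "nat \<Rightarrow> real^'n::finite \<Rightarrow> complex" and m :: nat and \<rho> \<tau> \<eta> p A t :: real
  assumes finite: "\<And>l T. 0 < T \<Longrightarrow> finite {(i, k). i \<in> wav_idx TYPE('n) \<and> T \<le> norm (wav_coef \<psi> f i l k)}"
    and card: "\<And>l T. 0 < T \<Longrightarrow>
      real (card {(i, k). i \<in> wav_idx TYPE('n) \<and> T \<le> norm (wav_coef \<psi> f i l k)}) * T powr p
        \<le> A * 2 powr (\<rho> * l)"
    and "\<eta> < 1" "1 \<le> m" "0 \<le> t"
    and "1 + \<rho> * (m + 1) + \<bar>\<rho>\<bar> - \<tau> * p < t * ((1 - \<eta>) * m)"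
  shows "packing_premeasure t {x. \<forall>n\<ge>J. large_coef_nearby \<psi> f \<eta> \<tau> m n x} = 0"
proof -
  define S where "S n = (SIGMA l:{m * n..<m * n + n}.
      {(i, k). i \<in> wav_idx TYPE('n) \<and> 2 powr (\<tau> * n) \<le> norm (wav_coef \<psi> f i l k)})" for n :: nat
  define Y where "Y n = (\<lambda>(l, i, k). inverse ((2::real) ^ l) *\<^sub>R ivec k) ` S n" for n
  have "finite (S n)" for n
    unfolding S_def using finite by auto
  show ?thesis
  proof (rule packing_premeasure_eq_0_if_covered[where Y = Y and \<rho> = "sqrt CARD('n)" and \<gamma> = "(1 - \<eta>) * m"])
    fix n assume "J \<le> n"
    show "{x. \<forall>n\<ge>J. large_coef_nearby \<psi> f \<eta> \<tau> m n x}
        \<subseteq> (\<Union>y\<in>Y n. cball y (sqrt CARD('n) * 2 powr (- ((1 - \<eta>) * m) * n)))"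
    proof clarify
      fix x assume "\<forall>n\<ge>J. large_coef_nearby \<psi> f \<eta> \<tau> m n x"
      with \<open>J \<le> n\<close> obtain l i k where l: "l \<in> {m * n..<m * n + n}" and "i \<in> wav_idx TYPE('n)"
        and near: "infnorm ((2::real) ^ l *\<^sub>R x - ivec k) \<le> 2 powr (\<eta> * l)"
        and "2 powr (\<tau> * n) \<le> norm (wav_coef \<psi> f i l k)"
        unfolding large_coef_nearby_def by blast
      then have "inverse ((2::real) ^ l) *\<^sub>R ivec k \<in> Y n"
        unfolding Y_def S_def by (intro image_eqI[where x = "(l, i, k)"]) auto
      moreover have "dist (inverse ((2::real) ^ l) *\<^sub>R ivec k) x \<le> sqrt CARD('n) * 2 powr (- ((1 - \<eta>) * m) * n)"
        using near \<open>\<eta> < 1\<close> l by (intro dist_dyadic_point_le) auto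
      ultimately show "x \<in> (\<Union>y\<in>Y n. cball y (sqrt CARD('n) * 2 powr (- ((1 - \<eta>) * m) * n)))"
        by auto
    qed
  next
    fix n
    show "finite (Y n)"
      unfolding Y_def using \<open>finite (S n)\<close> by simp
    have "card (Y n) \<le> card (S n)"
      unfolding Y_def using \<open>finite (S n)\<close> by (rule card_image_le)
    then show "real (card (Y n)) \<le> A * 2 powr ((1 + \<rho> * (m + 1) + \<bar>\<rho>\<bar> - \<tau> * p) * n)"
      using card_large_coef_block_le[OF finite card, of m n \<tau>] unfolding S_def by linarith
  qed (use assms in auto)
qed

lemma exists_covering_parameters:
  fixes l0 t p K \<beta> :: real
  assumes "0 \<le> l0" "l0 < t" "0 < p" "0 \<le> K" "\<beta> \<noteq> 0"
  obtains \<eta> \<epsilon> :: real and m :: nat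
  where "0 < \<eta>" "\<eta> < 1" "0 < \<epsilon>" "1 \<le> m" "\<epsilon> * (2 * m + 2) \<le> \<bar>\<beta>\<bar>"
    and "(m + 1) * (l0 + 2 * p * \<epsilon>) + K + 1 < t * ((1 - \<eta>) * m)"
proof -
  define \<theta> where "\<theta> = t - l0"
  define \<eta> where "\<eta> = \<theta> / (2 * (t + 1))"
  define m :: nat where "m = nat \<lceil>8 * (l0 + \<theta> + K + 2) / \<theta>\<rceil> + 1"
  define \<epsilon> where "\<epsilon> = min (\<theta> / (16 * p)) (\<bar>\<beta>\<bar> / (2 * m + 2))"
  have "0 < \<theta>" "0 < t"
    using assms(1,2) by (auto simp: \<theta>_def)
  have "t * \<eta> = \<theta> / 2 * (t / (t + 1))"
    by (simp add: \<eta>_def field_simps)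
  also have "\<dots> \<le> \<theta> / 2"
    using \<open>0 < \<theta>\<close> \<open>0 < t\<close> by (intro mult_left_le) auto
  finally have t_\<eta>: "t * \<eta> \<le> \<theta> / 2" .
  have "8 * (l0 + \<theta> + K + 2) / \<theta> \<le> m"
    unfolding m_def by linarith
  then have m_\<theta>: "8 * l0 + 8 * \<theta> + 8 * K + 16 \<le> m * \<theta>"
    using \<open>0 < \<theta>\<close> by (simp add: field_simps)
  have "\<epsilon> \<le> \<theta> / (16 * p)"
    by (simp add: \<epsilon>_def)
  then have "2 * p * \<epsilon> \<le> \<theta> / 8"
    using \<open>0 < p\<close> by (simp add: field_simps)
  then have "(m + 1) * (l0 + 2 * p * \<epsilon>) + K + 1 \<le> (m + 1) * (l0 + \<theta> / 8) + K + 1"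
    by (intro add_right_mono mult_left_mono) auto
  also have "\<dots> < (l0 + \<theta> / 2) * m"
  proof -
    have "(m + 1) * (l0 + \<theta> / 8) = m * l0 + (m * \<theta>) / 8 + l0 + \<theta> / 8"
      "(l0 + \<theta> / 2) * m = m * l0 + (m * \<theta>) / 2"
      by (simp_all add: algebra_simps)
    with m_\<theta> \<open>0 < \<theta>\<close> assms(1,4) show ?thesis by linarith
  qed
  also have "\<dots> \<le> (t - t * \<eta>) * m"
  proof (rule mult_right_mono)
    show "l0 + \<theta> / 2 \<le> t - t * \<eta>"
      using t_\<eta> \<theta>_def by linarith
  qed simp
  also have "\<dots> = t * ((1 - \<eta>) * m)"
    by (simp add: algebra_simps)
  finally have "(m + 1) * (l0 + 2 * p * \<epsilon>) + K + 1 < t * ((1 - \<eta>) * m)" .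
  moreover have "\<epsilon> \<le> \<bar>\<beta>\<bar> / (2 * m + 2)"
    by (simp add: \<epsilon>_def)
  then have "\<epsilon> * (2 * m + 2) \<le> \<bar>\<beta>\<bar>"
    by (simp add: field_simps)
  moreover have "0 < \<eta>" "\<eta> < 1"
    using \<open>0 < \<theta>\<close> \<open>0 < t\<close> assms(1) by (auto simp: \<eta>_def \<theta>_def field_simps)
  moreover have "0 < \<epsilon>"
    using \<open>0 < \<theta>\<close> \<open>0 < p\<close> assms(5) by (simp add: \<epsilon>_def)
  moreover have "1 \<le> m"
    by (simp add: m_def)
  ultimately show thesis
    by (intro that[of \<eta> \<epsilon> m])
qed

lemma packing_measure_level_set_eq_0:
  fixes \<phi> :: "real^'n::finite \<Rightarrow> complex" and \<psi> :: "nat \<Rightarrow> real^'n \<Rightarrow> complex"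
    and s p \<beta> t :: real
  assumes decay: "\<And>i. i \<in> wav_idx TYPE('n) \<Longrightarrow> fast_decay (\<psi> i)"
    and "f \<in> besov_inf \<phi> \<psi> s p" and "0 < p" and "\<beta> \<noteq> 0"
    and "0 \<le> real CARD('n) - s * p - \<beta> * p" and "real CARD('n) - s * p - \<beta> * p < t"
  shows "packing_measure t (level_set \<phi> \<psi> \<beta> f) = 0"
proof -
  define \<rho> where "\<rho> = real CARD('n) - s * p"
  define \<kappa> where "\<kappa> = real CARD('n) / p - s"
  obtain B where "0 \<le> B"
    and coef: "\<And>i l k. i \<in> wav_idx TYPE('n) \<Longrightarrow> norm (wav_coef \<psi> f i l k) \<le> B * 2 powr (\<kappa> * l)"
    and finite: "\<And>l T. 0 < T \<Longrightarrow> finite {(i, k). i \<in> wav_idx TYPE('n) \<and> T \<le> norm (wav_coef \<psi> f i l k)}"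
    and card: "\<And>l T. 0 < T \<Longrightarrow>
      real (card {(i, k). i \<in> wav_idx TYPE('n) \<and> T \<le> norm (wav_coef \<psi> f i l k)}) * T powr p
        \<le> B powr p * 2 powr (\<rho> * l)"
    by (rule besov_inf_wav_coef_bounds[OF assms(2,3), folded \<kappa>_def \<rho>_def]) blast
  have "0 \<le> \<rho> - \<beta> * p" "\<rho> - \<beta> * p < t"
    using assms(5,6) by (simp_all add: \<rho>_def)
  then obtain \<eta> \<epsilon> :: real and m :: nat where "0 < \<eta>" "\<eta> < 1" "0 < \<epsilon>" "1 \<le> m"
    and "\<epsilon> * (2 * m + 2) \<le> \<bar>\<beta>\<bar>"
    and dimension: "(m + 1) * (\<rho> - \<beta> * p + 2 * p * \<epsilon>) + \<bar>\<rho>\<bar> + 1 < t * ((1 - \<eta>) * m)"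
    by (rule exists_covering_parameters[OF _ _ \<open>0 < p\<close> abs_ge_zero \<open>\<beta> \<noteq> 0\<close>])
  define \<tau> where "\<tau> = (\<beta> - 2 * \<epsilon>) * (m + 1)"
  \<comment> \<open>Extra decay \<open>M\<close> lets far-away coefficients, of size at most \<open>B 2 powr (\<kappa> l)\<close>, contribute less than \<open>2 powr (\<tau> n)\<close>.\<close>
  define M where "M = nat \<lceil>(\<bar>\<kappa>\<bar> + \<bar>\<tau>\<bar>) / \<eta>\<rceil>"
  have "(\<bar>\<kappa>\<bar> + \<bar>\<tau>\<bar>) / \<eta> \<le> M"
    unfolding M_def by (rule real_nat_ceiling_ge)
  then have "\<bar>\<kappa>\<bar> + \<bar>\<tau>\<bar> \<le> \<eta> * M"
    using \<open>0 < \<eta>\<close> by (simp add: pos_divide_le_eq mult.commute)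
  have "finite (wav_idx TYPE('n))"
    by (simp add: wav_idx_def)
  then have "\<exists>C. \<forall>i\<in>wav_idx TYPE('n). \<forall>z. norm (\<psi> i z) \<le> C * (1 + infnorm z) powr - real (2 * CARD('n) + M)"
    using decay by (rule uniform_fast_decay)
  then obtain C where "\<forall>i\<in>wav_idx TYPE('n). \<forall>z. norm (\<psi> i z) \<le> C * (1 + infnorm z) powr - real (2 * CARD('n) + M)" ..
  then have "\<forall>\<^sub>F n in sequentially. large_coef_nearby \<psi> f \<eta> \<tau> m n x"
    if "x \<in> level_set \<phi> \<psi> \<beta> f" for x
    unfolding \<tau>_def using that coef \<open>0 \<le> B\<close> \<open>0 < \<epsilon>\<close> \<open>1 \<le> m\<close> \<open>\<epsilon> * (2 * m + 2) \<le> \<bar>\<beta>\<bar>\<close>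
      \<open>\<bar>\<kappa>\<bar> + \<bar>\<tau>\<bar> \<le> \<eta> * M\<close>
    by (intro eventually_large_coef_nearby[where C = C]) (auto simp: \<tau>_def)
  then have "level_set \<phi> \<psi> \<beta> f \<subseteq> (\<Union>J. {x. \<forall>n\<ge>J. large_coef_nearby \<psi> f \<eta> \<tau> m n x})"
    by (auto simp: eventually_sequentially)
  moreover have "1 + \<rho> * (m + 1) + \<bar>\<rho>\<bar> - \<tau> * p < t * ((1 - \<eta>) * m)"
    using dimension by (simp add: \<tau>_def algebra_simps)
  then have "packing_premeasure t {x. \<forall>n\<ge>J. large_coef_nearby \<psi> f \<eta> \<tau> m n x} = 0" for J
    using finite card \<open>\<eta> < 1\<close> \<open>1 \<le> m\<close> assms(5,6)
    by (intro packing_premeasure_large_coef_nearby_eq_0) auto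
  ultimately show ?thesis
    by (rule packing_measure_eq_0_if_covered)
qed

theorem proposition3p3:
  fixes V :: "int \<Rightarrow> (real^'n::finite \<Rightarrow> complex) set"
    and \<phi> :: "real^'n \<Rightarrow> complex"
    and \<psi> :: "nat \<Rightarrow> real^'n \<Rightarrow> complex"
    and s p \<beta> :: real
    and f :: "real^'n \<Rightarrow> complex"
  assumes "ortho_mra V \<phi>"
    and "assoc_wavelets V \<psi>"
    and "Cdecay (nat \<lfloor>s\<rfloor> + 1) \<phi>"
    and "\<forall>i\<in>wav_idx TYPE('n). Cdecay (nat \<lfloor>s\<rfloor> + 1) (\<psi> i)"
    and "0 \<le> s"
    and "1 \<le> p"
    and "- s \<le> \<beta>" and "\<beta> \<le> real CARD('n) / p - s" and "\<beta> \<noteq> 0"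
    and "f \<in> besov_inf \<phi> \<psi> s p"
  shows "packing_dim (level_set \<phi> \<psi> \<beta> f) \<le> real CARD('n) - s * p - \<beta> * p"
proof (rule packing_dim_le)
  have "\<beta> * p \<le> (real CARD('n) / p - s) * p"
    using assms(6,8) by (intro mult_right_mono) auto
  also have "\<dots> = real CARD('n) - s * p"
    using assms(6) by (simp add: field_simps)
  finally show "0 \<le> real CARD('n) - s * p - \<beta> * p"
    by simp
  have "fast_decay (\<psi> i)" if "i \<in> wav_idx TYPE('n)" for i
    using assms(4) that by simp
  with assms(6,9,10) \<open>0 \<le> real CARD('n) - s * p - \<beta> * p\<close>
  show "packing_measure t (level_set \<phi> \<psi> \<beta> f) = 0" if "real CARD('n) - s * p - \<beta> * p < t" for t
    using that by (intro packing_measure_level_set_eq_0) auto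
qed

end
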